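(* $R_{\mathcal{S}^*_{Ne}}(\mathcal{S}^* )=1/4$, where $\mathcal{S}^*$ is the class of starlike functions; the bound is attained by the Koebe function $k(z)=z/(1-z)^2$, i.e. $\mathcal{Q}_k(\partial\mathbb{D}_{1/4})\cap\partial\Omega_{Ne}\neq\emptyset$.
   Context: $\mathbb{D}=\{|z|<1\}$, $\mathbb{D}_r=\{|z|<r\}$. $\mathcal{A}$ is the class of analytic $f$ on $\mathbb{D}$ with $f(0)=0$, $f'(0)=1$; for $f\in\mathcal{A}$ let $\mathcal{Q}_f(z)=zf'(z)/f(z)$. $\mathcal{S}^*=\{f\in\mathcal{A}:\mathrm{Re}\,\mathcal{Q}_f(z)>0,\ z\in\mathbb{D}\}$. Let $\varphi_{Ne}(z)=1+z-z^3/3$ (univalent on $\mathbb{D}$), $\Omega_{Ne}=\varphi_{Ne}(\mathbb{D})$, and $\mathcal{S}^*_{Ne}=\{f\in\mathcal{A}:\mathcal{Q}_f\prec\varphi_{Ne}\}$, where $F\prec G$ means $F=G\circ w$ for some analytic $w:\mathbb{D}\to\mathbb{D}$, $w(0)=0$. For $\mathcal{G}\subset\mathcal{A}$, $R_{\mathcal{S}^*_{Ne}}(\mathcal{G})$ is the largest $\rho\in(0,1]$ such that $\mathcal{Q}_f(\mathbb{D}_\rho)\subseteq\Omega_{Ne}$ for all $f\in\mathcal{G}$ (equivalently $r^{-1}f(rz)\in\mathcal{S}^*_{Ne}$ for all $f\in\mathcal{G}$, $0<r\le\rho$). *)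

theory Defs
  imports "HOL-Analysis.Analysis"
begin

definition phiNe :: "complex \<Rightarrow> complex" where
  "phiNe z = 1 + z - z ^ 3 / 3"

definition OmegaNe :: "complex set" where
  "OmegaNe = phiNe ` ball 0 1"

definition classA :: "(complex \<Rightarrow> complex) \<Rightarrow> bool" where
  "classA f \<longleftrightarrow> f holomorphic_on ball 0 1 \<and> f 0 = 0 \<and> deriv f 0 = 1"

text \<open>Q_f(z) = z f'(z)/f(z), with its removable value 1 at z = 0 (since f(0)=0, f'(0)=1).\<close>
definition Qf :: "(complex \<Rightarrow> complex) \<Rightarrow> complex \<Rightarrow> complex" where
  "Qf f z = (if z = 0 then 1 else z * deriv f z / f z)"

definition starlike :: "(complex \<Rightarrow> complex) set" where
  "starlike = {f. classA f \<and> (\<forall>z\<in>ball 0 1. Re (Qf f z) > 0)}"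

definition radiusNe :: "(complex \<Rightarrow> complex) set \<Rightarrow> real" where
  "radiusNe G = Sup {\<rho>. 0 < \<rho> \<and> \<rho> \<le> 1 \<and> (\<forall>f\<in>G. Qf f ` ball 0 \<rho> \<subseteq> OmegaNe)}"

definition koebe :: "complex \<Rightarrow> complex" where
  "koebe z = z / (1 - z) ^ 2"

end

theory Submission
  imports Defs "HOL-Complex_Analysis.Conformal_Mappings"
begin

text \<open>
  For starlike f the function p = Q_f is holomorphic with p(0) = 1 and Re p > 0, so its Cayley
  transform w = (p - 1)/(p + 1) is a self-map of the disk fixing 0. By the Schwarz lemma
  |w(z)| \<le> |z|, hence p = (1 + w)/(1 - w) maps |z| < r into the disk with centre
  (1 + r^2)/(1 - r^2) and radius 2r/(1 - r^2); for r = 1/4 this is |q - 17/15| < 8/15.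
  On the unit circle |phi_Ne(u) - 17/15| \<ge> 8/15, so by connectedness this disk lies in Omega_Ne.
  Conversely Q_k(z) = (1 + z)/(1 - z) for the Koebe function, and Q_k(1/4) = 5/3 = phi_Ne(1) is a
  boundary point of Omega_Ne, so no larger radius works.
\<close>

lemma norm_diff_one_less_norm_add_one_iff:
  fixes q :: complex
  shows "cmod (q - 1) < cmod (q + 1) \<longleftrightarrow> 0 < Re q"
  unfolding cmod_def by (simp add: power2_eq_square algebra_simps)

lemma Re_Cayley_pos:
  fixes z :: complex
  assumes "cmod z < 1" shows "0 < Re ((1 + z) / (1 - z))"
proof -
  have z1: "1 - z \<noteq> 0" using assms by auto
  have "(1 + z) / (1 - z) - 1 = 2 * z / (1 - z)" and "(1 + z) / (1 - z) + 1 = 2 / (1 - z)"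
    using z1 by (simp_all add: field_simps)
  then show ?thesis
    using assms z1 norm_diff_one_less_norm_add_one_iff[of "(1 + z) / (1 - z)"]
    by (simp add: norm_divide norm_mult divide_strict_right_mono)
qed

lemma Cayley_image_ball:
  fixes w :: complex and r :: real
  assumes w: "cmod w < r" and r: "r < 1"
  shows "(1 + w) / (1 - w) \<in> ball ((1 + r\<^sup>2) / (1 - r\<^sup>2)) (2 * r / (1 - r\<^sup>2))"
proof -
  obtain a b where ab: "w = Complex a b" by (cases w)
  have r0: "0 < r" using w norm_ge_zero[of w] by linarith
  have r2: "0 < 1 - r\<^sup>2" using r r0 by (simp add: power_less_one_iff abs_square_less_1)
  have w1: "1 - w \<noteq> 0" using w r by auto
  have "(cmod w)\<^sup>2 < r\<^sup>2" using w by (intro power_strict_mono) auto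
  then have "(a\<^sup>2 + b\<^sup>2) * (1 - r\<^sup>2) < r\<^sup>2 * (1 - r\<^sup>2)"
    unfolding cmod_power2 ab using r2 by simp
  \<comment> \<open>after clearing denominators the claim reads |w - r^2| < r |1 - w|, whose square is this inequality\<close>
  then have "(cmod (w - r\<^sup>2))\<^sup>2 < (r * cmod (1 - w))\<^sup>2"
    unfolding power_mult_distrib cmod_power2 ab
    by (simp add: power2_eq_square algebra_simps)
  then have "cmod (w - r\<^sup>2) < r * cmod (1 - w)"
    by (rule power2_less_imp_less) (use r0 in simp)
  then have lt: "cmod ((w - r\<^sup>2) / (1 - w)) < r"
    using w1 by (simp add: norm_divide divide_less_eq)
  have "1 - (complex_of_real r)\<^sup>2 \<noteq> 0"
    using r2 by (metis less_irrefl of_real_1 of_real_diff of_real_eq_0_iff of_real_power)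
  then have "(1 + w) / (1 - w) - (1 + r\<^sup>2) / (1 - r\<^sup>2)
      = of_real (2 / (1 - r\<^sup>2)) * ((w - r\<^sup>2) / (1 - w))"
    using w1 by (simp add: field_simps)
  then have "dist ((1 + w) / (1 - w)) ((1 + r\<^sup>2) / (1 - r\<^sup>2)) = 2 / (1 - r\<^sup>2) * cmod ((w - r\<^sup>2) / (1 - w))"
    using r2 by (simp only: dist_norm norm_mult norm_of_real) simp
  also have "\<dots> < 2 * r / (1 - r\<^sup>2)"
    using lt r2 by (simp add: divide_strict_right_mono)
  finally show ?thesis by (simp add: dist_commute)
qed

lemma Re_pos_subordinate_Cayley:
  fixes p :: "complex \<Rightarrow> complex"
  assumes holp: "p holomorphic_on ball 0 1" and p0: "p 0 = 1"
    and re: "\<And>z. z \<in> ball 0 1 \<Longrightarrow> 0 < Re (p z)" and z: "cmod z < 1"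
  obtains w where "cmod w \<le> cmod z" and "p z = (1 + w) / (1 - w)"
proof -
  have p1: "p z + 1 \<noteq> 0" if "z \<in> ball 0 1" for z
  proof -
    have "0 < Re (p z + 1)" using re[OF that] by simp
    then show ?thesis by force
  qed
  define w where "w z = (p z - 1) / (p z + 1)" for z
  have "w holomorphic_on ball 0 1"
    unfolding w_def by (intro holomorphic_intros holp) (use p1 in auto)
  moreover have "w 0 = 0" by (simp add: w_def p0)
  moreover have "cmod (w z) < 1" if "cmod z < 1" for z
    using re[of z] p1[of z] that norm_diff_one_less_norm_add_one_iff[of "p z"]
    by (simp add: w_def norm_divide divide_less_eq)
  ultimately have "cmod (w z) \<le> cmod z" using z by (rule Schwarz_Lemma(1))
  moreover have "p z = (1 + w z) / (1 - w z)"
    using p1[of z] z by (simp add: w_def divide_simps)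
  ultimately show ?thesis by (rule that)
qed

lemma Re_pos_image_ball:
  fixes p :: "complex \<Rightarrow> complex"
  assumes "p holomorphic_on ball 0 1" and "p 0 = 1"
    and "\<And>z. z \<in> ball 0 1 \<Longrightarrow> 0 < Re (p z)" and "cmod z < r" and "r < 1"
  shows "p z \<in> ball ((1 + r\<^sup>2) / (1 - r\<^sup>2)) (2 * r / (1 - r\<^sup>2))"
proof -
  obtain w where "cmod w \<le> cmod z" and "p z = (1 + w) / (1 - w)"
    using Re_pos_subordinate_Cayley[OF assms(1-3), of z] assms(4,5) by auto
  with assms show ?thesis using Cayley_image_ball[of w r] by simp
qed

lemma holomorphic_Qf:
  assumes "classA f" and nz: "\<And>z. z \<in> ball 0 1 \<Longrightarrow> z \<noteq> 0 \<Longrightarrow> f z \<noteq> 0"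
  shows "Qf f holomorphic_on ball 0 1"
proof -
  have holf: "f holomorphic_on ball 0 1" and f0: "f 0 = 0" and f'0: "deriv f 0 = 1"
    using assms(1) by (auto simp: classA_def)
  \<comment> \<open>the difference quotient g z = f z / z extends holomorphically with g 0 = 1, and Q_f = z f' / f = f' / g\<close>
  define g where "g = (\<lambda>z. if z = 0 then deriv f 0 else (f z - f 0) / (z - 0))"
  have "g holomorphic_on ball 0 1"
    unfolding g_def by (rule pole_lemma_open[OF holf]) auto
  moreover have "g z \<noteq> 0" if "z \<in> ball 0 1" for z
    using nz[OF that] f0 f'0 by (auto simp: g_def)
  ultimately have "(\<lambda>z. deriv f z / g z) holomorphic_on ball 0 1"
    by (intro holomorphic_intros holomorphic_deriv holf) auto
  moreover have "deriv f z / g z = Qf f z" for z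
    using f0 f'0 by (cases "z = 0") (auto simp: g_def Qf_def)
  ultimately show ?thesis by simp
qed

lemma frontier_image_ball_subset:
  fixes g :: "'a::heine_borel \<Rightarrow> 'b::metric_space"
  assumes "continuous_on (cball a r) g" and "open (g ` ball a r)"
  shows "frontier (g ` ball a r) \<subseteq> g ` sphere a r"
proof
  fix x assume x: "x \<in> frontier (g ` ball a r)"
  have "closed (g ` cball a r)"
    by (intro compact_imp_closed compact_continuous_image assms(1) compact_cball)
  then have "closure (g ` ball a r) \<subseteq> g ` cball a r"
    by (rule closure_minimal[rotated]) auto
  then obtain u where "u \<in> cball a r" "x = g u"
    using x by (auto simp: frontier_def)
  moreover have "x \<notin> g ` ball a r"
    using x assms(2) by (simp add: frontier_def interior_open)
  ultimately show "x \<in> g ` sphere a r" by (force simp: order_le_less)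
qed

lemma connected_subset_image_ball:
  fixes g :: "'a::heine_borel \<Rightarrow> 'b::metric_space"
  assumes "continuous_on (cball a r) g" and "open (g ` ball a r)"
    and "connected S" and "S \<inter> g ` ball a r \<noteq> {}" and "S \<inter> g ` sphere a r = {}"
  shows "S \<subseteq> g ` ball a r"
  using connected_Int_frontier[OF assms(3,4)] frontier_image_ball_subset[OF assms(1,2)] assms(5)
  by blast

lemma power3_Complex_unit_circle:
  assumes "x\<^sup>2 + y\<^sup>2 = 1"
  shows "Complex x y ^ 3 = Complex (4 * x ^ 3 - 3 * x) (3 * y - 4 * y ^ 3)"
proof -
  have "x ^ 3 - 3 * x * y\<^sup>2 = 4 * x ^ 3 - 3 * x" and "3 * x\<^sup>2 * y - y ^ 3 = 3 * y - 4 * y ^ 3"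
    using assms by (simp_all add: algebra_simps power2_eq_square power3_eq_cube flip: eq_diff_eq)
  then show ?thesis
    by (simp add: complex_eq_iff power3_eq_cube power2_eq_square algebra_simps)
qed

lemma dist_phiNe_sphere_ge:
  assumes "cmod u = 1"
  shows "8/15 \<le> dist (phiNe u) (17/15)"
proof -
  obtain x y where u: "u = Complex x y" by (cases u)
  have xy: "x\<^sup>2 + y\<^sup>2 = 1" using assms by (simp add: u cmod_def)
  then have x2: "x\<^sup>2 \<le> 1" by (metis le_add_same_cancel1 zero_le_power2)
  then have x: "-1 \<le> x" "x \<le> 1" by (simp_all add: abs_square_le_1 abs_le_iff)
  then have "4 * x\<^sup>2 - 11 * x - 17 \<le> 0" using x2 by linarith
  have "(dist (phiNe u) (17/15))\<^sup>2 = (- 2/15 + 2 * x - 4 * x ^ 3 / 3)\<^sup>2 + (4 * y ^ 3 / 3)\<^sup>2"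
    by (simp add: dist_norm cmod_power2 u phiNe_def power3_Complex_unit_circle[OF xy] field_simps)
  also have "\<dots> = (8/15)\<^sup>2 + 4/45 * ((x - 1) * (4 * x\<^sup>2 - 11 * x - 17))"
  proof -
    have "(4 * y ^ 3 / 3)\<^sup>2 = 16/9 * (y\<^sup>2) ^ 3"
      by (simp add: power_mult_distrib power_divide flip: power_mult)
    also have "\<dots> = 16/9 * (1 - x\<^sup>2) ^ 3"
      using xy by (metis add_diff_cancel_left')
    finally show ?thesis by (simp add: algebra_simps power2_eq_square power3_eq_cube)
  qed
  \<comment> \<open>equality only at u = 1, whose image 5/3 is where the Koebe function leaves the region\<close>
  also have "\<dots> \<ge> (8/15)\<^sup>2"
    using x \<open>4 * x\<^sup>2 - 11 * x - 17 \<le> 0\<close> by (simp add: mult_nonpos_nonpos)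
  finally show ?thesis by (rule power2_le_imp_le) simp
qed

lemma open_OmegaNe: "open OmegaNe"
  unfolding OmegaNe_def
proof (rule open_mapping_thm[where S = UNIV])
  show "phiNe holomorphic_on UNIV" unfolding phiNe_def by (intro holomorphic_intros) auto
  have "phiNe 0 \<noteq> phiNe 1" by (simp add: phiNe_def)
  then show "\<not> phiNe constant_on UNIV"
    unfolding constant_on_def by (metis UNIV_I)
qed auto

lemma ball_subset_OmegaNe: "ball (17/15) (8/15) \<subseteq> OmegaNe"
  unfolding OmegaNe_def
proof (rule connected_subset_image_ball)
  show "continuous_on (cball 0 1) phiNe"
    unfolding phiNe_def by (intro continuous_intros) auto
  show "open (phiNe ` ball 0 1)" using open_OmegaNe by (simp add: OmegaNe_def)
  have "1 \<in> phiNe ` ball 0 1"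
    by (rule image_eqI[of _ _ 0]) (simp_all add: phiNe_def)
  moreover have "1 \<in> ball (17/15 :: complex) (8/15)" by (simp add: dist_norm)
  ultimately show "ball (17/15) (8/15) \<inter> phiNe ` ball 0 1 \<noteq> {}" by blast
  show "ball (17/15) (8/15) \<inter> phiNe ` sphere 0 1 = {}"
    using dist_phiNe_sphere_ge by (force simp: dist_commute)
qed auto

lemma starlike_nonzero:
  assumes "f \<in> starlike" and "z \<in> ball 0 1" and "z \<noteq> 0" shows "f z \<noteq> 0"
  using assms by (force simp: starlike_def Qf_def)

lemma Qf_starlike_ball_quarter:
  assumes f: "f \<in> starlike" and z: "cmod z < 1/4"
  shows "Qf f z \<in> OmegaNe"
proof -
  have "classA f" and re: "\<And>z. z \<in> ball 0 1 \<Longrightarrow> 0 < Re (Qf f z)"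
    using f by (auto simp: starlike_def)
  then have "Qf f holomorphic_on ball 0 1"
    using holomorphic_Qf starlike_nonzero[OF f] by blast
  then have "Qf f z \<in> ball ((1 + (1/4)\<^sup>2) / (1 - (1/4)\<^sup>2)) (2 * (1/4) / (1 - (1/4)\<^sup>2))"
    using Re_pos_image_ball[of "Qf f" z "1/4"] re z by (simp add: Qf_def)
  also have "\<dots> = ball (17/15) (8/15)" by (simp add: power2_eq_square)
  finally show ?thesis using ball_subset_OmegaNe by blast
qed

lemma koebe_has_field_derivative:
  assumes "z \<noteq> 1" shows "(koebe has_field_derivative (1 + z) / (1 - z) ^ 3) (at z)"
proof -
  have D: "(koebe has_field_derivative (1 * (1 - z)\<^sup>2 - z * (2 * (1 - z) * - 1)) / ((1 - z)\<^sup>2)\<^sup>2) (at z)"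
    unfolding koebe_def[abs_def] using assms
    by (auto intro!: derivative_eq_intros)
  have "(1 * (1 - z)\<^sup>2 - z * (2 * (1 - z) * - 1)) / ((1 - z)\<^sup>2)\<^sup>2
      = (1 - z) * (1 + z) / ((1 - z)\<^sup>2)\<^sup>2"
    by (simp add: algebra_simps power2_eq_square)
  also have "\<dots> = (1 + z) / (1 - z) ^ 3"
    using assms by (simp add: power2_eq_square power3_eq_cube)
  finally show ?thesis using D by simp
qed

lemma Qf_koebe:
  assumes "z \<noteq> 1" shows "Qf koebe z = (1 + z) / (1 - z)"
proof (cases "z = 0")
  case False
  have "1 - z \<noteq> 0" using assms by simp
  then have "z * ((1 + z) / (1 - z) ^ 3) / (z / (1 - z)\<^sup>2) = (1 + z) / (1 - z)"
    using False by (simp add: power2_eq_square power3_eq_cube)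
  then show ?thesis
    using False DERIV_imp_deriv[OF koebe_has_field_derivative[OF assms]] by (simp add: Qf_def koebe_def)
qed (simp add: Qf_def)

lemma koebe_starlike: "koebe \<in> starlike"
proof -
  have "koebe holomorphic_on ball 0 1"
    unfolding koebe_def[abs_def] by (intro holomorphic_intros) auto
  moreover have "deriv koebe 0 = 1"
    using DERIV_imp_deriv[OF koebe_has_field_derivative[of 0]] by simp
  moreover have "0 < Re (Qf koebe z)" if "z \<in> ball 0 1" for z
  proof -
    have "z \<noteq> 1" using that by auto
    then show ?thesis using that Qf_koebe[of z] Re_Cayley_pos[of z] by simp
  qed
  ultimately show ?thesis
    by (simp add: starlike_def classA_def koebe_def)
qed

lemma phiNe_eq_five_thirds_iff: "phiNe u = 5/3 \<longleftrightarrow> u = 1 \<or> u = -2"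
proof -
  have e: "(u - 1)\<^sup>2 * (u + 2) = 5 - 3 * phiNe u"
    by (simp add: phiNe_def algebra_simps power2_eq_square power3_eq_cube)
  have "phiNe u = 5/3 \<longleftrightarrow> 5 - 3 * phiNe u = 0"
    by (simp add: eq_divide_eq mult.commute)
  also have "\<dots> \<longleftrightarrow> (u - 1)\<^sup>2 * (u + 2) = 0"
    by (simp only: e)
  also have "\<dots> \<longleftrightarrow> u = 1 \<or> u = -2"
    by (simp add: eq_neg_iff_add_eq_0)
  finally show ?thesis .
qed

lemma five_thirds_not_in_OmegaNe: "5/3 \<notin> OmegaNe"
proof
  assume "5/3 \<in> OmegaNe"
  then obtain u where "u \<in> ball 0 1" and "5/3 = phiNe u"
    unfolding OmegaNe_def by (rule imageE)
  then show False using phiNe_eq_five_thirds_iff[of u] by auto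
qed

lemma five_thirds_in_frontier_OmegaNe: "5/3 \<in> frontier OmegaNe"
proof -
  have "phiNe ` closure (ball 0 1) \<subseteq> closure OmegaNe"
    unfolding OmegaNe_def phiNe_def
    by (intro image_closure_subset continuous_intros closure_subset) auto
  moreover have "phiNe 1 = 5/3" by (simp add: phiNe_def)
  ultimately have "5/3 \<in> closure OmegaNe" by force
  then show ?thesis
    using five_thirds_not_in_OmegaNe open_OmegaNe by (simp add: frontier_def interior_open)
qed

lemma radiusNe_eqI:
  assumes "0 < r" "r \<le> 1" and "\<forall>f\<in>G. Qf f ` ball 0 r \<subseteq> OmegaNe"
    and "g \<in> G" "cmod z = r" "Qf g z \<notin> OmegaNe"
  shows "radiusNe G = r"
  unfolding radiusNe_def
proof (rule cSup_eq_maximum)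
  show "r \<in> {\<rho>. 0 < \<rho> \<and> \<rho> \<le> 1 \<and> (\<forall>f\<in>G. Qf f ` ball 0 \<rho> \<subseteq> OmegaNe)}"
    using assms by simp
  fix \<rho> assume "\<rho> \<in> {\<rho>. 0 < \<rho> \<and> \<rho> \<le> 1 \<and> (\<forall>f\<in>G. Qf f ` ball 0 \<rho> \<subseteq> OmegaNe)}"
  then show "\<rho> \<le> r"
    using assms(4-6) by (force simp: not_le)
qed

theorem mainTheorem4:
  shows "radiusNe starlike = 1 / 4
    \<and> (\<forall>f\<in>starlike. Qf f ` ball 0 (1/4) \<subseteq> OmegaNe)
    \<and> koebe \<in> starlike
    \<and> Qf koebe ` sphere 0 (1/4) \<inter> frontier OmegaNe \<noteq> {}"
proof -
  have inside: "\<forall>f\<in>starlike. Qf f ` ball 0 (1/4) \<subseteq> OmegaNe"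
    using Qf_starlike_ball_quarter by auto
  have extremal: "Qf koebe (1/4) = 5/3"
    by (simp add: Qf_koebe)
  have "radiusNe starlike = 1/4"
    using radiusNe_eqI[OF _ _ inside koebe_starlike, of "1/4"] extremal five_thirds_not_in_OmegaNe
    by simp
  moreover have "5/3 \<in> Qf koebe ` sphere 0 (1/4) \<inter> frontier OmegaNe"
    using extremal five_thirds_in_frontier_OmegaNe
    by (metis IntI image_eqI mem_sphere_0 norm_divide norm_one norm_numeral)
  ultimately show ?thesis
    using inside koebe_starlike by blast
qed

end
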